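(* Let $T$ be an irreducible shift of finite type, $Y$ a sofic shift, and $f:T\to Y$ a factor map which is right-continuing almost-everywhere with retract $N\ge 0$. Let $(\Sigma_Y,\pi_Y)$ be the minimal right-resolving cover of $Y$. Then there exists a continuous shift-commuting map $\varphi:T\to\Sigma_Y$ with $f=\pi_Y\circ\varphi$.
   Context: Subshifts are closed shift-invariant subsets of $A^{\mathbb Z}$, $A$ finite, with shift $\sigma(x)_i=x_{i+1}$; a factor map is a continuous, shift-commuting, onto map ($Y$ is then irreducible). A point $y\in Y$ is left-transitive in $Y$ if $\{\sigma^i(y): i\le 0\}$ is dense in $Y$. For an integer $n\ge0$, $f:X\to Y$ is right-continuing almost-everywhere with retract $n$ if for every $x\in X$ and every left-transitive $y\in Y$ with $f(x)_i=y_i$ for all $i\le n$, there exists $x'\in X$ with $x'_i=x_i$ for all $i\le 0$ and $f(x')=y$. The minimal right-resolving (Fischer) cover $(\Sigma_Y,\pi_Y)$ of an irreducible sofic shift $Y$ is the (unique up to conjugacy) pair of an irreducible one-step SFT $\Sigma_Y$ and a one-block factor map $\pi_Y:\Sigma_Y\to Y$ that is right-resolving (if $ab,ac$ are $\Sigma_Y$-words with $\pi_Y(b)=\pi_Y(c)$ then $b=c$) and follower-separated (distinct symbols $a\neq b$ have distinct sets $\{\pi_Y(aw): aw \text{ a } \Sigma_Y\text{-word}\}$). *)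

theory Defs
  imports Main
begin

definition shift :: "(int \<Rightarrow> 'a) \<Rightarrow> (int \<Rightarrow> 'a)" where
  "shift x = (\<lambda>i. x (i + 1))"

definition shiftn :: "int \<Rightarrow> (int \<Rightarrow> 'a) \<Rightarrow> (int \<Rightarrow> 'a)" where
  "shiftn k x = (\<lambda>i. x (i + k))"

definition closed_seq :: "(int \<Rightarrow> 'a) set \<Rightarrow> bool" where
  "closed_seq X \<longleftrightarrow> (\<forall>x. (\<forall>n::nat. \<exists>z\<in>X. \<forall>i. \<bar>i\<bar> \<le> int n \<longrightarrow> z i = x i) \<longrightarrow> x \<in> X)"

definition subshift :: "(int \<Rightarrow> 'a::finite) set \<Rightarrow> bool" where
  "subshift X \<longleftrightarrow> closed_seq X \<and> shift ` X = X"

definition cont_on :: "(int \<Rightarrow> 'a) set \<Rightarrow> ((int \<Rightarrow> 'a) \<Rightarrow> (int \<Rightarrow> 'b)) \<Rightarrow> bool" where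
  "cont_on X f \<longleftrightarrow> (\<forall>x\<in>X. \<forall>n::nat. \<exists>m::nat. \<forall>x'\<in>X.
      (\<forall>i. \<bar>i\<bar> \<le> int m \<longrightarrow> x' i = x i) \<longrightarrow> (\<forall>i. \<bar>i\<bar> \<le> int n \<longrightarrow> f x' i = f x i))"

definition occurs :: "'a list \<Rightarrow> (int \<Rightarrow> 'a) \<Rightarrow> bool" where
  "occurs w x \<longleftrightarrow> (\<exists>i. \<forall>k<length w. x (i + int k) = w ! k)"

definition lang :: "(int \<Rightarrow> 'a) set \<Rightarrow> 'a list set" where
  "lang X = {w. \<exists>x\<in>X. occurs w x}"

definition irreducible_shift :: "(int \<Rightarrow> 'a::finite) set \<Rightarrow> bool" where
  "irreducible_shift X \<longleftrightarrow> (\<forall>u\<in>lang X. \<forall>v\<in>lang X. \<exists>w. u @ w @ v \<in> lang X)"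

definition SFT :: "(int \<Rightarrow> 'a::finite) set \<Rightarrow> bool" where
  "SFT X \<longleftrightarrow> (\<exists>F::'a list set. finite F \<and> X = {x. \<forall>w\<in>F. \<not> occurs w x})"

definition one_step_SFT :: "(int \<Rightarrow> 'a::finite) set \<Rightarrow> bool" where
  "one_step_SFT X \<longleftrightarrow> (\<exists>E::('a \<times> 'a) set. X = {x. \<forall>i. (x i, x (i + 1)) \<in> E})"

definition shift_commuting :: "(int \<Rightarrow> 'a) set \<Rightarrow> ((int \<Rightarrow> 'a) \<Rightarrow> (int \<Rightarrow> 'b)) \<Rightarrow> bool" where
  "shift_commuting X f \<longleftrightarrow> (\<forall>x\<in>X. f (shift x) = shift (f x))"

definition factor_map :: "(int \<Rightarrow> 'a::finite) set \<Rightarrow> (int \<Rightarrow> 'b::finite) set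
    \<Rightarrow> ((int \<Rightarrow> 'a) \<Rightarrow> (int \<Rightarrow> 'b)) \<Rightarrow> bool" where
  "factor_map X Y f \<longleftrightarrow> cont_on X f \<and> shift_commuting X f \<and> f ` X = Y"

text \<open>y is left-transitive in Y: the backward orbit {sigma^i y | i <= 0} is dense in Y.\<close>
definition left_transitive :: "(int \<Rightarrow> 'b::finite) set \<Rightarrow> (int \<Rightarrow> 'b) \<Rightarrow> bool" where
  "left_transitive Y y \<longleftrightarrow> y \<in> Y \<and>
     (\<forall>z\<in>Y. \<forall>n::nat. \<exists>i\<le>0. \<forall>j. \<bar>j\<bar> \<le> int n \<longrightarrow> shiftn i y j = z j)"

definition right_continuing_ae :: "(int \<Rightarrow> 'a::finite) set \<Rightarrow> (int \<Rightarrow> 'b::finite) set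
    \<Rightarrow> ((int \<Rightarrow> 'a) \<Rightarrow> (int \<Rightarrow> 'b)) \<Rightarrow> nat \<Rightarrow> bool" where
  "right_continuing_ae X Y f n \<longleftrightarrow>
     (\<forall>x\<in>X. \<forall>y. left_transitive Y y \<longrightarrow> (\<forall>i\<le>int n. f x i = y i) \<longrightarrow>
        (\<exists>x'\<in>X. (\<forall>i\<le>0. x' i = x i) \<and> f x' = y))"

definition minimal_rr_cover :: "(int \<Rightarrow> 'b::finite) set \<Rightarrow> (int \<Rightarrow> 'c::finite) set
    \<Rightarrow> ((int \<Rightarrow> 'c) \<Rightarrow> (int \<Rightarrow> 'b)) \<Rightarrow> bool" where
  "minimal_rr_cover Y S pi \<longleftrightarrow>
     irreducible_shift S \<and> one_step_SFT S \<and>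
     (\<exists>p::'c \<Rightarrow> 'b. (\<forall>x. pi x = p \<circ> x) \<and>
        factor_map S Y pi \<and>
        (\<forall>a b c. [a, b] \<in> lang S \<longrightarrow> [a, c] \<in> lang S \<longrightarrow> p b = p c \<longrightarrow> b = c) \<and>
        (\<forall>a b. [a] \<in> lang S \<longrightarrow> [b] \<in> lang S \<longrightarrow> a \<noteq> b \<longrightarrow>
           {map p (a # w) | w. a # w \<in> lang S} \<noteq> {map p (b # w) | w. b # w \<in> lang S}))"

end

theory Submission
  imports Defs "HOL-Library.Countable" "HOL-Library.Infinite_Set"
begin

(* 1. Compactness: f is a sliding block code of some radius rad (uniform continuity).
   2. Every x in T can be changed on a left half-line (staying in T) so that its image is
      left-transitive: using irreducibility and the SFT gluing property we prepend, one
      after the other, all words of T (a diagonal construction over an enumeration).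
   3. The Fischer cover has a synchronizing word: a label word all of whose paths end in
      the same state.  A left-transitive y contains it arbitrarily far in the past, so y has
      a unique lift lift y to S, and lift y j depends only on y restricted to (-inf, j].
   4. Right-continuation plus follower-separation of S show that the state lift (f x) N of a
      point x with left-transitive image depends only on x on a bounded window.
   5. phi x i is this state for a left-transitive modification of the shifted point
      shiftn (i - N) x; it is a sliding block code into S commuting with the shift, and
      p (phi x i) = f x i. *)

definition wd :: "(int \<Rightarrow> 'x) \<Rightarrow> int \<Rightarrow> nat \<Rightarrow> 'x list" where
  "wd x i n = map (\<lambda>k. x (i + int k)) [0..<n]"

lemma length_wd [simp]: "length (wd x i n) = n"
  by (simp add: wd_def)

lemma nth_wd [simp]: "k < n \<Longrightarrow> wd x i n ! k = x (i + int k)"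
  by (simp add: wd_def)

lemma occurs_wd: "occurs w x \<longleftrightarrow> (\<exists>i. wd x i (length w) = w)"
  unfolding occurs_def by (auto simp: list_eq_iff_nth_eq)

lemma wd_in_lang: "x \<in> X \<Longrightarrow> wd x i n \<in> lang X"
  unfolding lang_def occurs_wd by auto

lemma lang_iff: "w \<in> lang X \<longleftrightarrow> (\<exists>x\<in>X. \<exists>i. \<forall>k<length w. x (i + int k) = w ! k)"
  unfolding lang_def occurs_def by auto

lemma lang_infix:
  assumes "xs @ ys @ zs \<in> lang X" shows "ys \<in> lang X"
proof -
  from assms obtain x i where x: "x \<in> X" "\<forall>k<length (xs @ ys @ zs). x (i + int k) = (xs @ ys @ zs) ! k"
    unfolding lang_iff by auto
  have "\<forall>k<length ys. x (i + int (length xs) + int k) = ys ! k"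
  proof (intro allI impI)
    fix k assume k: "k < length ys"
    then have "length xs + k < length (xs @ ys @ zs)" by simp
    then have "x (i + int (length xs + k)) = (xs @ ys @ zs) ! (length xs + k)" using x(2) by blast
    also have "\<dots> = ys ! k" using k by (simp add: nth_append)
    finally show "x (i + int (length xs) + int k) = ys ! k" by (simp add: add.assoc)
  qed
  then show ?thesis using x(1) unfolding lang_iff by blast
qed

lemma lang_prefix: "xs @ ys \<in> lang X \<Longrightarrow> xs \<in> lang X"
  using lang_infix[of "[]" xs ys] by simp

lemma lang_suffix: "xs @ ys \<in> lang X \<Longrightarrow> ys \<in> lang X"
  using lang_infix[of xs ys "[]"] by simp

lemma pair_lang: "s \<in> S \<Longrightarrow> [s i, s (i + 1)] \<in> lang S"
  using wd_in_lang[of s S i 2] by (simp add: wd_def numeral_2_eq_2)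

lemma single_lang: "s \<in> S \<Longrightarrow> [s i] \<in> lang S"
  using wd_in_lang[of s S i 1] by (simp add: wd_def)

lemma shiftn_shiftn [simp]: "shiftn a (shiftn b x) = shiftn (a + b) x"
  by (simp add: shiftn_def add.commute add.left_commute)

lemma shiftn_0 [simp]: "shiftn 0 x = x"
  by (simp add: shiftn_def)

lemma shift_shiftn: "shift x = shiftn 1 x"
  by (simp add: shift_def shiftn_def)

lemma shiftn_app: "shiftn k x i = x (i + k)"
  by (simp add: shiftn_def)

lemma shiftn_Suc: "shiftn (int (Suc n)) x = shift (shiftn (int n) x)"
  by (simp add: shift_def shiftn_def add.commute add.left_commute)

text \<open>A set with \<open>shift ` X = X\<close> is invariant under all powers of the shift, including
  negative ones (which need surjectivity of the shift on X).\<close>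
lemma shift_closed_shiftn:
  assumes X: "shift ` X = X" and x: "x \<in> X" shows "shiftn k x \<in> X"
proof -
  have pos: "shiftn (int n) z \<in> X" if "z \<in> X" for n z
    using that by (induction n) (use X shiftn_Suc in auto)
  have neg: "shiftn (- int n) z \<in> X" if "z \<in> X" for n z
    using that
  proof (induction n arbitrary: z)
    case 0 then show ?case by simp
  next
    case (Suc n)
    then obtain w where w: "w \<in> X" "shiftn (- int n) z = shift w" using X by auto
    have "shiftn (- int (Suc n)) z = w"
    proof
      fix i
      have "w i = shift w (i - 1)" by (simp add: shift_def)
      also have "\<dots> = z (i - 1 - int n)" using w(2) by (metis shiftn_app diff_conv_add_uminus)
      finally show "shiftn (- int (Suc n)) z i = w i" by (simp add: shiftn_app algebra_simps)
    qed
    then show ?case using w by simp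
  qed
  show ?thesis
    using pos[OF x, of "nat k"] neg[OF x, of "nat (- k)"] by (cases "k \<ge> 0") auto
qed

lemma comm_shiftn:
  assumes X: "shift ` X = X" and f: "\<forall>x\<in>X. f (shift x) = shift (f x)" and x: "x \<in> X"
  shows "f (shiftn k x) = shiftn k (f x)"
proof -
  have pos: "f (shiftn (int n) z) = shiftn (int n) (f z)" if z: "z \<in> X" for n z
  proof (induction n)
    case 0 then show ?case by simp
  next
    case (Suc n)
    have "f (shiftn (int (Suc n)) z) = f (shift (shiftn (int n) z))" by (simp only: shiftn_Suc)
    also have "\<dots> = shift (f (shiftn (int n) z))" using f shift_closed_shiftn[OF X z] by blast
    also have "\<dots> = shiftn (int (Suc n)) (f z)" using Suc by (simp only: shiftn_Suc)
    finally show ?case .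
  qed
  show ?thesis
  proof (cases "k \<ge> 0")
    case True then show ?thesis using pos[OF x, of "nat k"] by simp
  next
    case False
    let ?z = "shiftn k x"
    have "f x = f (shiftn (int (nat (- k))) ?z)" using False by simp
    also have "\<dots> = shiftn (int (nat (- k))) (f ?z)" using pos[OF shift_closed_shiftn[OF X x]] .
    finally have "shiftn k (f x) = shiftn k (shiftn (int (nat (- k))) (f ?z))" by simp
    then show ?thesis using False by simp
  qed
qed

section \<open>Compactness of the full shift\<close>

text \<open>The central block of radius n of a point, as an element of a finite set.\<close>
definition restr :: "nat \<Rightarrow> (int \<Rightarrow> 'a) \<Rightarrow> (int \<Rightarrow> 'a)" where
  "restr n g = (\<lambda>i. if \<bar>i\<bar> \<le> int n then g i else undefined)"

lemma finite_restr: "finite (range (restr n :: (int \<Rightarrow> 'a::finite) \<Rightarrow> _))"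
proof -
  let ?B = "{g. \<forall>i. (i \<in> {- int n..int n} \<longrightarrow> g i \<in> (UNIV :: 'a set)) \<and>
                   (i \<notin> {- int n..int n} \<longrightarrow> g i = undefined)}"
  have "range (restr n :: (int \<Rightarrow> 'a) \<Rightarrow> _) \<subseteq> ?B" by (auto simp: restr_def)
  moreover have "finite ?B" by (rule finite_set_of_finite_funs) auto
  ultimately show ?thesis by (rule finite_subset)
qed

lemma restr_eq: "restr n g = restr n h \<Longrightarrow> \<bar>i\<bar> \<le> int n \<Longrightarrow> g i = h i"
  unfolding restr_def by (drule fun_cong[of _ _ i]) simp

lemma infinite_agreeing_subset:
  fixes X :: "nat \<Rightarrow> int \<Rightarrow> 'a::finite"
  assumes "infinite I"
  shows "\<exists>J. J \<subseteq> I \<and> infinite J \<and> (\<forall>m\<in>J. \<forall>m'\<in>J. restr n (X m) = restr n (X m'))"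
proof -
  have "finite ((\<lambda>m. restr n (X m)) ` I)"
    using finite_restr[of n] by (rule finite_subset[rotated]) auto
  from pigeonhole_infinite[OF assms this] obtain a0 where
    "a0 \<in> I" "infinite {a\<in>I. restr n (X a) = restr n (X a0)}" by auto
  then show ?thesis by (intro exI[of _ "{a\<in>I. restr n (X a) = restr n (X a0)}"]) auto
qed

definition refine :: "(nat \<Rightarrow> int \<Rightarrow> 'a::finite) \<Rightarrow> nat \<Rightarrow> nat set \<Rightarrow> nat set" where
  "refine X n I = (SOME J. J \<subseteq> I \<and> infinite J \<and> (\<forall>m\<in>J. \<forall>m'\<in>J. restr n (X m) = restr n (X m')))"

lemma refine:
  assumes "infinite I"
  shows "refine X n I \<subseteq> I" "infinite (refine X n I)"
    "\<forall>m\<in>refine X n I. \<forall>m'\<in>refine X n I. restr n (X m) = restr n (X m')"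
proof -
  have "refine X n I \<subseteq> I \<and> infinite (refine X n I) \<and>
      (\<forall>m\<in>refine X n I. \<forall>m'\<in>refine X n I. restr n (X m) = restr n (X m'))"
    unfolding refine_def by (rule someI_ex[OF infinite_agreeing_subset[OF assms]])
  then show "refine X n I \<subseteq> I" "infinite (refine X n I)"
    "\<forall>m\<in>refine X n I. \<forall>m'\<in>refine X n I. restr n (X m) = restr n (X m')" by blast+
qed

primrec nested :: "(nat \<Rightarrow> int \<Rightarrow> 'a::finite) \<Rightarrow> nat \<Rightarrow> nat set" where
  "nested X 0 = refine X 0 UNIV"
| "nested X (Suc n) = refine X (Suc n) (nested X n)"

lemma nested:
  "infinite (nested X n) \<and> (\<forall>m\<in>nested X n. \<forall>m'\<in>nested X n. restr n (X m) = restr n (X m'))"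
proof (induction n)
  case 0
  show ?case unfolding nested.simps using refine(2,3)[OF infinite_UNIV_nat, of X 0] by blast
next
  case (Suc n)
  then show ?case unfolding nested.simps using refine(2,3)[of "nested X n" X "Suc n"] by blast
qed

lemma nested_mono: "k \<le> n \<Longrightarrow> nested X n \<subseteq> nested X k"
proof (induction n rule: dec_induct)
  case (step n)
  have "nested X (Suc n) \<subseteq> nested X n"
    unfolding nested.simps using refine(1)[of "nested X n" X "Suc n"] nested[of X n] by blast
  then show ?case using step.IH by blast
qed simp

lemma cluster_point:
  fixes X :: "nat \<Rightarrow> int \<Rightarrow> 'a::finite"
  shows "\<exists>x. \<forall>n M. \<exists>m\<ge>M. \<forall>i. \<bar>i\<bar> \<le> int n \<longrightarrow> X m i = x i"
proof -
  define pick where "pick n = (SOME m. m \<in> nested X n)" for n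
  have pick: "pick n \<in> nested X n" for n
  proof -
    have "nested X n \<noteq> {}" using nested[of X n] by auto
    then show ?thesis unfolding pick_def by (simp add: some_in_eq)
  qed
  define x where "x i = X (pick (nat \<bar>i\<bar>)) i" for i
  have "\<exists>m\<ge>M. \<forall>i. \<bar>i\<bar> \<le> int n \<longrightarrow> X m i = x i" for n M
  proof -
    obtain m where m: "m \<in> nested X n" "m \<ge> M"
      using nested[of X n] by (meson infinite_nat_iff_unbounded_le)
    have "X m i = x i" if "\<bar>i\<bar> \<le> int n" for i
    proof -
      have "m \<in> nested X (nat \<bar>i\<bar>)" using nested_mono[of "nat \<bar>i\<bar>" n X] that m(1) by (auto simp: nat_le_iff)
      then have "restr (nat \<bar>i\<bar>) (X m) = restr (nat \<bar>i\<bar>) (X (pick (nat \<bar>i\<bar>)))"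
        using nested[of X "nat \<bar>i\<bar>"] pick by blast
      then show ?thesis unfolding x_def by (rule restr_eq) simp
    qed
    then show ?thesis using m by blast
  qed
  then show ?thesis by blast
qed

lemma uniformly_continuous:
  fixes X :: "(int \<Rightarrow> 'a::finite) set"
  assumes closed: "closed_seq X" and cont: "cont_on X f"
  shows "\<exists>m::nat. \<forall>x\<in>X. \<forall>x'\<in>X. (\<forall>i. \<bar>i\<bar> \<le> int m \<longrightarrow> x i = x' i) \<longrightarrow>
            (\<forall>i. \<bar>i\<bar> \<le> int n \<longrightarrow> f x i = f x' i)"
proof (rule ccontr)
  let ?far = "\<lambda>m (q :: (int \<Rightarrow> 'a) \<times> (int \<Rightarrow> 'a)). fst q \<in> X \<and> snd q \<in> X \<and>
      (\<forall>i. \<bar>i\<bar> \<le> int m \<longrightarrow> fst q i = snd q i) \<and> \<not> (\<forall>i. \<bar>i\<bar> \<le> int n \<longrightarrow> f (fst q) i = f (snd q) i)"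
  assume "\<not> ?thesis"
  then have "\<forall>m. \<exists>q. ?far m q" by fastforce
  then obtain Q where Q: "\<And>m. ?far m (Q m)" by metis
  define A where "A m = fst (Q m)" for m
  define B where "B m = snd (Q m)" for m
  have AB: "A m \<in> X" "B m \<in> X" "\<forall>i. \<bar>i\<bar> \<le> int m \<longrightarrow> A m i = B m i"
    "\<not> (\<forall>i. \<bar>i\<bar> \<le> int n \<longrightarrow> f (A m) i = f (B m) i)" for m
    using Q[of m] unfolding A_def B_def by blast+
  obtain x where x: "\<And>n M. \<exists>m\<ge>M. \<forall>i. \<bar>i\<bar> \<le> int n \<longrightarrow> A m i = x i"
    using cluster_point[of A] by blast
  have "\<exists>z\<in>X. \<forall>i. \<bar>i\<bar> \<le> int k \<longrightarrow> z i = x i" for k :: nat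
    using x[where n = k and M = 0] AB(1) by blast
  then have xX: "x \<in> X" using closed unfolding closed_seq_def by blast
  obtain m0 where m0: "\<forall>x'\<in>X. (\<forall>i. \<bar>i\<bar> \<le> int m0 \<longrightarrow> x' i = x i) \<longrightarrow>
      (\<forall>i. \<bar>i\<bar> \<le> int n \<longrightarrow> f x' i = f x i)"
    using cont xX unfolding cont_on_def by blast
  obtain m where m: "m \<ge> m0" "\<forall>i. \<bar>i\<bar> \<le> int m0 \<longrightarrow> A m i = x i" using x by blast
  have "\<forall>i. \<bar>i\<bar> \<le> int m0 \<longrightarrow> B m i = x i" using m AB(3)[of m] by force
  then have "\<forall>i. \<bar>i\<bar> \<le> int n \<longrightarrow> f (B m) i = f x i" using m0 AB(2) by blast
  moreover have "\<forall>i. \<bar>i\<bar> \<le> int n \<longrightarrow> f (A m) i = f x i" using m0 m(2) AB(1) by blast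
  ultimately show False using AB(4)[of m] by simp
qed

section \<open>Left-transitive points of a shift-invariant set\<close>

locale shift_invariant =
  fixes Y :: "(int \<Rightarrow> 'b::finite) set"
  assumes Y_shift: "shift ` Y = Y"
begin

lemma Y_shiftn: "y \<in> Y \<Longrightarrow> shiftn k y \<in> Y"
  using shift_closed_shiftn[OF Y_shift] .

lemma left_transitive_in: "left_transitive Y y \<Longrightarrow> y \<in> Y"
  unfolding left_transitive_def by blast

lemma left_transitive_past:
  assumes lt: "left_transitive Y y" and y': "y' \<in> Y" and agree: "\<forall>i\<le>K. y' i = y (i + d)"
  shows "left_transitive Y y'"
  unfolding left_transitive_def
proof (intro conjI ballI allI)
  show "y' \<in> Y" by fact
  fix z n assume z: "z \<in> Y"
  define D where "D = nat (\<bar>d\<bar> + \<bar>K\<bar> + int n)"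
  obtain i' where i': "i' \<le> 0" "\<forall>j. \<bar>j\<bar> \<le> int (n + D) \<longrightarrow> shiftn i' y j = shiftn (int D) z j"
    using lt Y_shiftn[OF z] unfolding left_transitive_def by blast
  show "\<exists>i\<le>0. \<forall>j. \<bar>j\<bar> \<le> int n \<longrightarrow> shiftn i y' j = z j"
  proof (intro exI conjI allI impI)
    show "i' - int D - d \<le> 0" using i'(1) unfolding D_def by simp
    fix j assume j: "\<bar>j\<bar> \<le> int n"
    have "j + (i' - int D - d) \<le> K" using i'(1) j unfolding D_def by simp
    then have "y' (j + (i' - int D - d)) = y (j + (i' - int D - d) + d)" using agree by blast
    also have "\<dots> = shiftn i' y (j - int D)" by (simp add: shiftn_app algebra_simps)
    also have "\<dots> = shiftn (int D) z (j - int D)" using i'(2) j by auto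
    also have "\<dots> = z j" by (simp add: shiftn_app)
    finally show "shiftn (i' - int D - d) y' j = z j" by (simp add: shiftn_app)
  qed
qed

lemma left_transitive_shift: "left_transitive Y y \<Longrightarrow> left_transitive Y (shift y)"
  using left_transitive_past[of y "shift y" 0 1] Y_shift left_transitive_in
  by (auto simp: shift_def)

lemma left_transitive_occurs:
  assumes lt: "left_transitive Y y" and z: "z \<in> Y" and w: "wd z a m = w"
  shows "\<exists>i. i + int m \<le> K \<and> wd y i m = w"
proof -
  define D where "D = nat (\<bar>K\<bar> + int m)"
  obtain i' where i': "i' \<le> 0" "\<forall>j. \<bar>j\<bar> \<le> int (D + m) \<longrightarrow> shiftn i' y j = shiftn (a + int D) z j"
    using lt Y_shiftn[OF z] unfolding left_transitive_def by blast
  have "wd y (i' - int D) m ! k = wd z a m ! k" if "k < m" for k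
  proof -
    have "\<bar>int k - int D\<bar> \<le> int (D + m)" using that by simp
    then have "shiftn i' y (int k - int D) = shiftn (a + int D) z (int k - int D)" using i'(2) by blast
    then show ?thesis using that by (simp add: shiftn_app algebra_simps)
  qed
  then have "wd y (i' - int D) m = w" using w by (simp add: list_eq_iff_nth_eq)
  moreover have "i' - int D + int m \<le> K" using i'(1) unfolding D_def by simp
  ultimately show ?thesis by blast
qed

end

locale sft_factor = shift_invariant Y
  for Y :: "(int \<Rightarrow> 'b::finite) set" +
  fixes T :: "(int \<Rightarrow> 'a::finite) set" and f :: "(int \<Rightarrow> 'a) \<Rightarrow> (int \<Rightarrow> 'b)"
    and F :: "'a list set"
  assumes T_shift: "shift ` T = T" and T_closed: "closed_seq T" and T_irr: "irreducible_shift T"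
    and T_F: "T = {x. \<forall>w\<in>F. \<not> occurs w x}" and F_fin: "finite F"
    and f_cont: "cont_on T f" and f_comm: "\<forall>x\<in>T. f (shift x) = shift (f x)" and f_onto: "f ` T = Y"
begin

lemma T_shiftn: "x \<in> T \<Longrightarrow> shiftn k x \<in> T"
  using shift_closed_shiftn[OF T_shift] .

lemma f_shiftn: "x \<in> T \<Longrightarrow> f (shiftn k x) = shiftn k (f x)"
  using comm_shiftn[OF T_shift f_comm] .

lemma f_in_Y: "x \<in> T \<Longrightarrow> f x \<in> Y"
  using f_onto by blast

definition rad :: nat where
  "rad = (SOME m. \<forall>x\<in>T. \<forall>x'\<in>T. (\<forall>i. \<bar>i\<bar> \<le> int m \<longrightarrow> x i = x' i) \<longrightarrow>
                   (\<forall>i. \<bar>i\<bar> \<le> int 0 \<longrightarrow> f x i = f x' i))"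

lemma radius_0:
  assumes "x \<in> T" "x' \<in> T" "\<forall>i. \<bar>i\<bar> \<le> int rad \<longrightarrow> x i = x' i"
  shows "f x 0 = f x' 0"
proof -
  have "\<forall>x\<in>T. \<forall>x'\<in>T. (\<forall>i. \<bar>i\<bar> \<le> int rad \<longrightarrow> x i = x' i) \<longrightarrow>
      (\<forall>i. \<bar>i\<bar> \<le> int 0 \<longrightarrow> f x i = f x' i)"
    unfolding rad_def by (rule someI_ex[OF uniformly_continuous[OF T_closed f_cont]])
  then have "\<forall>i. \<bar>i\<bar> \<le> int 0 \<longrightarrow> f x i = f x' i" using assms by blast
  then show ?thesis by simp
qed

lemma radius:
  assumes x: "x \<in> T" and x': "x' \<in> T" and agree: "\<forall>i. \<bar>i - j\<bar> \<le> int rad \<longrightarrow> x i = x' i"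
  shows "f x j = f x' j"
proof -
  have "f (shiftn j x) 0 = f (shiftn j x') 0"
    using radius_0[OF T_shiftn[OF x] T_shiftn[OF x']] agree by (simp add: shiftn_app)
  then show ?thesis using f_shiftn[OF x] f_shiftn[OF x'] by (simp add: shiftn_app)
qed

lemma radius_window:
  assumes x: "x \<in> T" and x': "x' \<in> T"
    and agree: "\<forall>i. a - int rad \<le> i \<and> i \<le> b + int rad \<longrightarrow> x i = x' i"
    and j: "a \<le> j" "j \<le> b"
  shows "f x j = f x' j"
proof (rule radius[OF x x'], intro allI impI)
  fix i assume "\<bar>i - j\<bar> \<le> int rad"
  then have "a - int rad \<le> i \<and> i \<le> b + int rad" using j by linarith
  then show "x i = x' i" using agree by blast
qed

definition Lm :: nat where
  "Lm = Max (insert 0 (length ` F))"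

lemma forbidden_length: "w \<in> F \<Longrightarrow> length w \<le> Lm"
  unfolding Lm_def using F_fin by (intro Max_ge) auto

lemma glue_T:
  assumes x1: "x1 \<in> T" and x2: "x2 \<in> T" and agree: "\<forall>i. c < i \<and> i \<le> c + int Lm \<longrightarrow> x1 i = x2 i"
  shows "(\<lambda>i. if i \<le> c then x1 i else x2 i) \<in> T"
  unfolding T_F mem_Collect_eq
proof (intro ballI notI)
  fix w assume w: "w \<in> F" and oc: "occurs w (\<lambda>i. if i \<le> c then x1 i else x2 i)"
  then obtain i where i: "\<forall>k<length w. (if i + int k \<le> c then x1 (i + int k) else x2 (i + int k)) = w ! k"
    unfolding occurs_def by blast
  have lw: "length w \<le> Lm" using forbidden_length[OF w] .
  show False
  proof (cases "i \<le> c")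
    case True
    have "x1 (i + int k) = w ! k" if k: "k < length w" for k
    proof (cases "i + int k \<le> c")
      case True then show ?thesis using i k by auto
    next
      case False
      then have "x1 (i + int k) = x2 (i + int k)" using agree k lw \<open>i \<le> c\<close> by auto
      then show ?thesis using i k False by auto
    qed
    then have "occurs w x1" unfolding occurs_def by blast
    then show False using x1 w T_F by blast
  next
    case False
    then have "occurs w x2" using i unfolding occurs_def by auto
    then show False using x2 w T_F by blast
  qed
qed

definition margin :: nat where
  "margin = 2 * rad + Lm"

lemma graft_past:
  assumes x2: "x2 \<in> T" and x': "x' \<in> T" and agree: "\<forall>i. - int margin \<le> i \<and> i \<le> 0 \<longrightarrow> x2 i = x' i"
  shows "\<exists>x''\<in>T. (\<forall>i\<le>- int rad. f x'' i = f x2 i) \<and> (\<forall>i\<ge>- int rad. f x'' i = f x' i)"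
proof (intro bexI conjI allI impI)
  define x'' where "x'' = (\<lambda>i. if i \<le> - int Lm then x2 i else x' i)"
  show x'': "x'' \<in> T" unfolding x''_def
    by (rule glue_T[OF x2 x']) (use agree in \<open>auto simp: margin_def\<close>)
  have past: "x'' k = x2 k" if "k \<le> 0" for k
    using that agree unfolding x''_def margin_def by auto
  have future: "x'' k = x' k" if "k \<ge> - int margin" for k
    using that agree unfolding x''_def margin_def by auto
  show "f x'' i = f x2 i" if "i \<le> - int rad" for i
    by (rule radius_window[OF x'' x2, of i i]) (use that past in auto)
  show "f x'' i = f x' i" if "i \<ge> - int rad" for i
    by (rule radius_window[OF x'' x', of i i]) (use that future in \<open>auto simp: margin_def\<close>)
qed

text \<open>Any word of T can be placed to the left of position P without changing a point of T
  from P on (irreducibility plus gluing).\<close>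
lemma extend_left:
  assumes x: "x \<in> T" and w: "w \<in> lang T"
  shows "\<exists>x'\<in>T. (\<forall>i\<ge>P. x' i = x i) \<and> (\<exists>i. i + int (length w) \<le> P \<and> wd x' i (length w) = w)"
proof -
  define v where "v = wd x P Lm"
  have "v \<in> lang T" unfolding v_def using wd_in_lang[OF x] .
  then obtain c where "w @ c @ v \<in> lang T" using T_irr w unfolding irreducible_shift_def by blast
  then obtain t i0 where t: "t \<in> T" "wd t i0 (length (w @ c @ v)) = w @ c @ v"
    unfolding lang_def occurs_wd by blast
  have tk: "t (i0 + int k) = (w @ c @ v) ! k" if "k < length w + length c + Lm" for k
  proof -
    have "wd t i0 (length (w @ c @ v)) ! k = (w @ c @ v) ! k" using t(2) by simp
    then show ?thesis using that by (simp add: v_def)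
  qed
  define t' where "t' = shiftn (i0 + int (length w) + int (length c) - P) t"
  have t': "t' \<in> T" unfolding t'_def using T_shiftn[OF t(1)] .
  have agree: "\<forall>i. P - 1 < i \<and> i \<le> P - 1 + int Lm \<longrightarrow> t' i = x i"
  proof (intro allI impI)
    fix i assume i: "P - 1 < i \<and> i \<le> P - 1 + int Lm"
    define k where "k = nat (i - P)"
    have k: "k < Lm" "i = P + int k" using i unfolding k_def by auto
    have "t' i = t (i0 + int (length w + length c + k))" unfolding t'_def using k(2)
      by (simp add: shiftn_app algebra_simps)
    also have "\<dots> = v ! k" using tk[of "length w + length c + k"] k(1) by (simp add: nth_append)
    also have "\<dots> = x i" unfolding v_def using k by simp
    finally show "t' i = x i" .
  qed
  define z where "z = (\<lambda>i. if i \<le> P - 1 then t' i else x i)"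
  have zT: "z \<in> T" unfolding z_def by (rule glue_T[OF t' x agree])
  define j where "j = P - int (length w) - int (length c)"
  have "wd z j (length w) ! k = w ! k" if "k < length w" for k
    using that tk[of k] unfolding z_def t'_def j_def by (simp add: shiftn_app algebra_simps nth_append)
  then have "wd z j (length w) = w" by (simp add: list_eq_iff_nth_eq)
  moreover have "\<forall>i\<ge>P. z i = x i" unfolding z_def by simp
  moreover have "j + int (length w) \<le> P" unfolding j_def by simp
  ultimately show ?thesis using zT by blast
qed

definition prepend :: "(int \<Rightarrow> 'a) \<Rightarrow> int \<Rightarrow> 'a list \<Rightarrow> (int \<Rightarrow> 'a) \<times> int" where
  "prepend z P w = (SOME q. fst q \<in> T \<and> (\<forall>i\<ge>P. fst q i = z i) \<and> snd q \<le> P - 1 \<and>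
      (\<exists>i\<ge>snd q. i + int (length w) \<le> P \<and> wd (fst q) i (length w) = w))"

lemma prepend:
  assumes "z \<in> T" "w \<in> lang T"
  shows "fst (prepend z P w) \<in> T \<and> (\<forall>i\<ge>P. fst (prepend z P w) i = z i) \<and> snd (prepend z P w) \<le> P - 1 \<and>
      (\<exists>i\<ge>snd (prepend z P w). i + int (length w) \<le> P \<and> wd (fst (prepend z P w)) i (length w) = w)"
proof -
  obtain x' i where x': "x' \<in> T" "\<forall>i\<ge>P. x' i = z i" "i + int (length w) \<le> P" "wd x' i (length w) = w"
    using extend_left[OF assms] by blast
  have "\<exists>i'\<ge>min (P - 1) i. i' + int (length w) \<le> P \<and> wd x' i' (length w) = w"
    using x' by (intro exI[of _ i]) auto
  then have "\<exists>q. fst q \<in> T \<and> (\<forall>i\<ge>P. fst q i = z i) \<and> snd q \<le> P - 1 \<and>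
      (\<exists>i\<ge>snd q. i + int (length w) \<le> P \<and> wd (fst q) i (length w) = w)"
    using x' by (intro exI[of _ "(x', min (P - 1) i)"]) auto
  then show ?thesis unfolding prepend_def by (rule someI_ex)
qed

text \<open>The k-th stage of the construction started at (x, P0): the k-th word (in a fixed
  enumeration of all lists) is prepended if it belongs to the language of T.\<close>
primrec approx :: "(int \<Rightarrow> 'a) \<Rightarrow> int \<Rightarrow> nat \<Rightarrow> (int \<Rightarrow> 'a) \<times> int" where
  "approx x P0 0 = (x, P0)"
| "approx x P0 (Suc k) = (let q = approx x P0 k in
     if from_nat k \<in> lang T then prepend (fst q) (snd q) (from_nat k) else (fst q, snd q - 1))"

lemma approx_in_T:
  assumes x: "x \<in> T"
  shows "fst (approx x P0 k) \<in> T \<and> snd (approx x P0 k) \<le> P0 - int k"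
proof (induction k)
  case (Suc k)
  then show ?case using prepend[of "fst (approx x P0 k)" "from_nat k" "snd (approx x P0 k)"]
    by (auto simp: Let_def)
qed (use x in simp)

lemma approx_step:
  assumes x: "x \<in> T"
  shows "(\<forall>i\<ge>snd (approx x P0 k). fst (approx x P0 (Suc k)) i = fst (approx x P0 k) i) \<and>
         snd (approx x P0 (Suc k)) \<le> snd (approx x P0 k) - 1 \<and>
         (from_nat k \<in> lang T \<longrightarrow> (\<exists>i\<ge>snd (approx x P0 (Suc k)).
              i + int (length (from_nat k :: 'a list)) \<le> snd (approx x P0 k) \<and>
              wd (fst (approx x P0 (Suc k))) i (length (from_nat k :: 'a list)) = from_nat k))"
  using prepend[of "fst (approx x P0 k)" "from_nat k" "snd (approx x P0 k)"] approx_in_T[OF x, of P0 k]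
  by (auto simp: Let_def)

lemma approx_stable:
  assumes x: "x \<in> T" and km: "k \<le> m"
  shows "snd (approx x P0 m) \<le> snd (approx x P0 k) \<and>
         (\<forall>i\<ge>snd (approx x P0 k). fst (approx x P0 m) i = fst (approx x P0 k) i)"
  using km
proof (induction m rule: dec_induct)
  case (step m)
  then show ?case using approx_step[OF x, of P0 m] by auto
qed simp

definition rich_limit :: "(int \<Rightarrow> 'a) \<Rightarrow> int \<Rightarrow> int \<Rightarrow> 'a" where
  "rich_limit x P0 i = fst (approx x P0 (nat (P0 - i))) i"

lemma rich_limit_eq:
  assumes x: "x \<in> T" and i: "i \<ge> snd (approx x P0 m)"
  shows "rich_limit x P0 i = fst (approx x P0 m) i"
proof -
  let ?K = "nat (P0 - i)"
  have iK: "i \<ge> snd (approx x P0 ?K)" using approx_in_T[OF x, of P0 ?K] by (cases "i \<le> P0") auto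
  have "fst (approx x P0 (max ?K m)) i = fst (approx x P0 ?K) i"
    using approx_stable[OF x, of ?K "max ?K m" P0] iK by simp
  moreover have "fst (approx x P0 (max ?K m)) i = fst (approx x P0 m) i"
    using approx_stable[OF x, of m "max ?K m" P0] i by simp
  ultimately show ?thesis unfolding rich_limit_def by simp
qed

lemma rich_limit_in_T:
  assumes x: "x \<in> T" shows "rich_limit x P0 \<in> T"
proof -
  have "\<exists>z\<in>T. \<forall>i. \<bar>i\<bar> \<le> int n \<longrightarrow> z i = rich_limit x P0 i" for n :: nat
  proof
    let ?m = "nat (P0 + int n)"
    show "fst (approx x P0 ?m) \<in> T" using approx_in_T[OF x] by blast
    have "snd (approx x P0 ?m) \<le> P0 - int ?m" using approx_in_T[OF x] by blast
    then have m: "snd (approx x P0 ?m) \<le> - int n" by linarith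
    show "\<forall>i. \<bar>i\<bar> \<le> int n \<longrightarrow> fst (approx x P0 ?m) i = rich_limit x P0 i"
    proof (intro allI impI)
      fix i :: int assume "\<bar>i\<bar> \<le> int n"
      then have "snd (approx x P0 ?m) \<le> i" using m by linarith
      then show "fst (approx x P0 ?m) i = rich_limit x P0 i" using rich_limit_eq[OF x] by simp
    qed
  qed
  then show ?thesis using T_closed unfolding closed_seq_def by blast
qed

lemma rich_limit_future: "x \<in> T \<Longrightarrow> i \<ge> P0 \<Longrightarrow> rich_limit x P0 i = x i"
  using rich_limit_eq[of x P0 0 i] by simp

lemma rich_limit_rich:
  assumes x: "x \<in> T" and w: "w \<in> lang T"
  shows "\<exists>i. i + int (length w) \<le> P0 \<and> wd (rich_limit x P0) i (length w) = w"
proof -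
  let ?k = "to_nat w"
  obtain i where i: "i \<ge> snd (approx x P0 (Suc ?k))" "i + int (length w) \<le> snd (approx x P0 ?k)"
    "wd (fst (approx x P0 (Suc ?k))) i (length w) = w"
    using approx_step[OF x, of P0 ?k] w by auto
  have "wd (rich_limit x P0) i (length w) = wd (fst (approx x P0 (Suc ?k))) i (length w)"
    using rich_limit_eq[OF x, of P0 "Suc ?k"] i(1) unfolding wd_def by (simp del: approx.simps)
  moreover have "snd (approx x P0 ?k) \<le> P0" using approx_in_T[OF x, of P0 ?k] by simp
  ultimately show ?thesis using i by (intro exI[of _ i]) auto
qed

lemma left_transitive_rich_past:
  assumes t: "t \<in> T" and rich: "\<forall>w\<in>lang T. \<exists>i. i + int (length w) \<le> 0 \<and> wd t i (length w) = w"
  shows "left_transitive Y (f t)"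
  unfolding left_transitive_def
proof (intro conjI ballI allI)
  show "f t \<in> Y" using f_in_Y[OF t] .
  fix z n assume "z \<in> Y"
  then obtain t0 where t0: "t0 \<in> T" "z = f t0" using f_onto by blast
  define w where "w = wd t0 (- int (n + rad)) (2 * (n + rad) + 1)"
  obtain i where i: "i + int (length w) \<le> 0" "wd t i (length w) = w"
    using rich wd_in_lang[OF t0(1)] unfolding w_def by blast
  define c where "c = i + int n + int rad"
  show "\<exists>i\<le>0. \<forall>j. \<bar>j\<bar> \<le> int n \<longrightarrow> shiftn i (f t) j = z j"
  proof (intro exI conjI allI impI)
    show "c \<le> 0" using i(1) unfolding c_def w_def by simp
    fix j :: int assume j: "\<bar>j\<bar> \<le> int n"
    have "\<forall>i'. \<bar>i' - j\<bar> \<le> int rad \<longrightarrow> shiftn c t i' = t0 i'"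
    proof (intro allI impI)
      fix i' assume i': "\<bar>i' - j\<bar> \<le> int rad"
      define k where "k = nat (i' + int n + int rad)"
      have k: "k < 2 * (n + rad) + 1" "i' = int k - int n - int rad" using i' j unfolding k_def by auto
      have "t0 i' = w ! k" using k(1) unfolding w_def by (subst k(2)) (simp add: algebra_simps)
      also have "\<dots> = t (i + int k)" using i(2) k(1) unfolding w_def by (metis length_wd nth_wd)
      also have "\<dots> = shiftn c t i'" unfolding c_def by (subst k(2)) (simp add: shiftn_app algebra_simps)
      finally show "shiftn c t i' = t0 i'" by simp
    qed
    then have "f (shiftn c t) j = f t0 j" by (rule radius[OF T_shiftn[OF t] t0(1)])
    then show "shiftn c (f t) j = z j" using f_shiftn[OF t] t0(2) by simp
  qed
qed

lemma left_transitive_modification: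
  assumes x: "x \<in> T" and P0: "P0 \<le> 0"
  shows "\<exists>t\<in>T. (\<forall>i\<ge>P0. t i = x i) \<and> left_transitive Y (f t)"
proof (intro bexI conjI)
  show "rich_limit x P0 \<in> T" using rich_limit_in_T[OF x] .
  show "\<forall>i\<ge>P0. rich_limit x P0 i = x i" using rich_limit_future[OF x] by simp
  have "\<exists>i. i + int (length w) \<le> 0 \<and> wd (rich_limit x P0) i (length w) = w"
    if w: "w \<in> lang T" for w
  proof -
    obtain i where "i + int (length w) \<le> P0" "wd (rich_limit x P0) i (length w) = w"
      using rich_limit_rich[OF x w] by blast
    then show ?thesis using P0 by (intro exI[of _ i]) simp
  qed
  then show "left_transitive Y (f (rich_limit x P0))"
    using left_transitive_rich_past[OF rich_limit_in_T[OF x]] by blast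
qed

end

section \<open>Right-resolving, follower-separated covers\<close>

locale fischer_cover = shift_invariant Y
  for Y :: "(int \<Rightarrow> 'b::finite) set" +
  fixes S :: "(int \<Rightarrow> 'c::finite) set" and p :: "'c \<Rightarrow> 'b" and E :: "('c \<times> 'c) set"
  assumes S_E: "S = {s. \<forall>i. (s i, s (i + 1)) \<in> E}"
    and S_onto: "(\<lambda>s. p \<circ> s) ` S = Y"
    and right_resolving: "\<forall>a b c. [a, b] \<in> lang S \<longrightarrow> [a, c] \<in> lang S \<longrightarrow> p b = p c \<longrightarrow> b = c"
    and follower_separated: "\<forall>a b. [a] \<in> lang S \<longrightarrow> [b] \<in> lang S \<longrightarrow> a \<noteq> b \<longrightarrow>
           {map p (a # w) | w. a # w \<in> lang S} \<noteq> {map p (b # w) | w. b # w \<in> lang S}"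
begin

lemma mem_S: "s \<in> S \<longleftrightarrow> (\<forall>i. (s i, s (i + 1)) \<in> E)"
  using S_E by blast

lemma glue_S:
  assumes s1: "s1 \<in> S" and s2: "s2 \<in> S" and common: "s1 e = s2 e'"
  shows "(\<lambda>i. if i \<le> e then s1 i else s2 (i - e + e')) \<in> S"
  unfolding mem_S
proof
  fix i
  consider "i < e" | "i = e" | "i > e" by linarith
  then show "(if i \<le> e then s1 i else s2 (i - e + e'),
              if i + 1 \<le> e then s1 (i + 1) else s2 (i + 1 - e + e')) \<in> E"
  proof cases
    case 1 then show ?thesis using s1 mem_S by auto
  next
    case 2 then show ?thesis using s2 common mem_S[of s2] by (auto simp: add.commute)
  next
    case 3
    have "(s2 (i - e + e'), s2 (i - e + e' + 1)) \<in> E" using s2 mem_S by blast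
    then show ?thesis using 3 by (simp add: algebra_simps)
  qed
qed

lemma glue_words:
  assumes \<pi>: "\<pi> \<in> lang S" "\<pi> \<noteq> []" and aw: "a # w \<in> lang S" and last: "last \<pi> = a"
  shows "\<pi> @ w \<in> lang S"
proof -
  obtain s1 i1 where s1: "s1 \<in> S" "\<forall>k<length \<pi>. s1 (i1 + int k) = \<pi> ! k" using \<pi>(1) lang_iff by metis
  obtain s2 i2 where s2: "s2 \<in> S" "\<forall>k<length (a # w). s2 (i2 + int k) = (a # w) ! k" using aw lang_iff by metis
  define e where "e = i1 + int (length \<pi>) - 1"
  have "s1 e = last \<pi>"
  proof -
    have "i1 + int (length \<pi> - 1) = e" unfolding e_def using \<pi>(2) by (cases \<pi>) auto
    moreover have "s1 (i1 + int (length \<pi> - 1)) = \<pi> ! (length \<pi> - 1)" using s1(2) \<pi>(2) by simp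
    ultimately show ?thesis using \<pi>(2) by (simp add: last_conv_nth)
  qed
  moreover have "s2 i2 = a" using s2(2)[rule_format, of 0] by simp
  ultimately have common: "s1 e = s2 i2" using last by simp
  define s where "s = (\<lambda>i. if i \<le> e then s1 i else s2 (i - e + i2))"
  have "s \<in> S" unfolding s_def by (rule glue_S[OF s1(1) s2(1) common])
  moreover have "\<forall>k<length (\<pi> @ w). s (i1 + int k) = (\<pi> @ w) ! k"
  proof (intro allI impI)
    fix k assume k: "k < length (\<pi> @ w)"
    show "s (i1 + int k) = (\<pi> @ w) ! k"
    proof (cases "k < length \<pi>")
      case True
      then show ?thesis using s1(2) unfolding s_def e_def by (simp add: nth_append)
    next
      case False
      define j where "j = k - length \<pi>"
      have j: "k = length \<pi> + j" "j < length w" using False k unfolding j_def by auto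
      have "s (i1 + int k) = s2 (i2 + int (Suc j))" unfolding s_def e_def using j(1) by (simp add: algebra_simps)
      also have "\<dots> = (a # w) ! Suc j" using s2(2)[rule_format, of "Suc j"] j(2) by simp
      also have "\<dots> = (\<pi> @ w) ! k" using j(1) by (simp add: nth_append)
      finally show ?thesis .
    qed
  qed
  ultimately show ?thesis using lang_iff by blast
qed

lemma right_resolving_words:
  "a # w1 \<in> lang S \<Longrightarrow> a # w2 \<in> lang S \<Longrightarrow> map p w1 = map p w2 \<Longrightarrow> w1 = w2"
proof (induction w1 arbitrary: a w2)
  case (Cons x xs)
  then obtain y ys where w2: "w2 = y # ys" by (cases w2) auto
  have "[a, x] \<in> lang S" using lang_prefix[of "[a, x]" xs] Cons.prems(1) by simp
  moreover have "[a, y] \<in> lang S" using lang_prefix[of "[a, y]" ys] Cons.prems(2) w2 by simp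
  moreover have "p x = p y" using Cons.prems(3) w2 by simp
  ultimately have xy: "x = y" using right_resolving by blast
  have "x # xs \<in> lang S" using lang_suffix[of "[a]" "x # xs"] Cons.prems(1) by simp
  moreover have "x # ys \<in> lang S" using lang_suffix[of "[a]" "y # ys"] Cons.prems(2) w2 xy by simp
  moreover have "map p xs = map p ys" using Cons.prems(3) w2 by simp
  ultimately show ?case using Cons.IH w2 xy by blast
qed simp

definition terminal :: "'b list \<Rightarrow> 'c set" where
  "terminal u = {last \<pi> | \<pi>. \<pi> \<in> lang S \<and> \<pi> \<noteq> [] \<and> map p \<pi> = u}"

definition follower :: "'c \<Rightarrow> 'b list set" where
  "follower b = {map p (b # w) | w. b # w \<in> lang S}"

text \<open>If a path from a \<in> terminal u has labels not in the follower set of another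
  b \<in> terminal u, then extending u by these labels strictly decreases the (nonempty) set of
  terminal states: right-resolving maps terminal states of the extension injectively back,
  and b has no preimage.\<close>
lemma terminal_shrink:
  assumes a: "a \<in> terminal u" and b: "b \<in> terminal u" and aw: "a # w \<in> lang S"
    and not_follower: "map p (a # w) \<notin> follower b"
  shows "terminal (u @ map p w) \<noteq> {} \<and> card (terminal (u @ map p w)) < card (terminal u)"
proof
  obtain \<pi> where \<pi>: "\<pi> \<in> lang S" "\<pi> \<noteq> []" "map p \<pi> = u" "last \<pi> = a" using a unfolding terminal_def by blast
  obtain \<rho> where \<rho>: "\<rho> \<in> lang S" "\<rho> \<noteq> []" "map p \<rho> = u" "last \<rho> = b" using b unfolding terminal_def by blast
  have pab: "p a = p b" using \<pi> \<rho> by (metis last_map)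
  have "\<pi> @ w \<in> lang S" using glue_words[OF \<pi>(1,2) aw \<pi>(4)] .
  then have "last (\<pi> @ w) \<in> terminal (u @ map p w)" unfolding terminal_def using \<pi> by force
  then show "terminal (u @ map p w) \<noteq> {}" by blast
  define G where "G c = last (c # (THE w'. c # w' \<in> lang S \<and> map p w' = map p w))" for c
  have "terminal (u @ map p w) \<subseteq> G ` (terminal u - {b})"
  proof
    fix c' assume "c' \<in> terminal (u @ map p w)"
    then obtain \<pi>' where \<pi>': "\<pi>' \<in> lang S" "\<pi>' \<noteq> []" "map p \<pi>' = u @ map p w" "last \<pi>' = c'"
      unfolding terminal_def by blast
    define \<pi>1 where "\<pi>1 = take (length u) \<pi>'"
    define \<pi>2 where "\<pi>2 = drop (length u) \<pi>'"
    have p1: "map p \<pi>1 = u" unfolding \<pi>1_def using \<pi>'(3) by (metis append_eq_conv_conj take_map)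
    have p2: "map p \<pi>2 = map p w" unfolding \<pi>2_def using \<pi>'(3) by (metis append_eq_conv_conj drop_map)
    have ne1: "\<pi>1 \<noteq> []" using p1 \<pi>(2,3) by auto
    have split: "\<pi>' = butlast \<pi>1 @ (last \<pi>1 # \<pi>2)" unfolding \<pi>1_def \<pi>2_def using ne1 \<pi>1_def
      by (metis append_butlast_last_id append_assoc append_Cons append_Nil append_take_drop_id)
    define c where "c = last \<pi>1"
    have "\<pi>1 \<in> lang S" using lang_prefix[of \<pi>1 \<pi>2] \<pi>'(1) unfolding \<pi>1_def \<pi>2_def by simp
    then have c_term: "c \<in> terminal u" unfolding terminal_def c_def using ne1 p1 by blast
    have c2: "c # \<pi>2 \<in> lang S" using lang_suffix[of "butlast \<pi>1" "last \<pi>1 # \<pi>2"] \<pi>'(1) split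
      unfolding c_def by simp
    have "c \<noteq> b"
    proof
      assume "c = b"
      then have "map p (b # \<pi>2) \<in> follower b" using c2 unfolding follower_def by blast
      moreover have "map p (b # \<pi>2) = map p (a # w)" using p2 pab by simp
      ultimately show False using not_follower by simp
    qed
    moreover have "(THE w'. c # w' \<in> lang S \<and> map p w' = map p w) = \<pi>2"
      using c2 p2 right_resolving_words by (intro the_equality) auto
    then have "c' = G c" using \<pi>'(4) split unfolding G_def c_def by (metis last_appendR list.distinct(1))
    ultimately show "c' \<in> G ` (terminal u - {b})" using c_term by blast
  qed
  then have "card (terminal (u @ map p w)) \<le> card (G ` (terminal u - {b}))" by (intro card_mono) auto
  also have "\<dots> \<le> card (terminal u - {b})" by (rule card_image_le) simp
  also have "\<dots> < card (terminal u)" using card_Diff1_less[of "terminal u" b] b by simp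
  finally show "card (terminal (u @ map p w)) < card (terminal u)" .
qed

text \<open>A label word u minimizing the number of terminal
  states has exactly one: two distinct ones have different follower sets, and following a
  separating word would shrink the set further.\<close>
lemma synchronizing_word_exists:
  assumes "S \<noteq> {}"
  shows "\<exists>u v. u \<noteq> [] \<and> terminal u = {v}"
proof -
  obtain s where s: "s \<in> S" using assms by blast
  have "terminal [p (s 0)] \<noteq> {}"
    using single_lang[OF s, of 0] unfolding terminal_def by force
  then obtain u0 where u0: "terminal u0 \<noteq> {}"
    and minimal: "\<forall>u. terminal u \<noteq> {} \<longrightarrow> card (terminal u0) \<le> card (terminal u)"
    using ex_has_least_nat[of "\<lambda>u. terminal u \<noteq> {}" _ "\<lambda>u. card (terminal u)"] by blast
  have "u0 \<noteq> []" using u0 unfolding terminal_def by auto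
  moreover have "card (terminal u0) = 1"
  proof (rule ccontr)
    assume "card (terminal u0) \<noteq> 1"
    moreover have "card (terminal u0) \<noteq> 0" using u0 by simp
    ultimately have "card (terminal u0) \<ge> 2" by linarith
    then obtain a b where ab: "a \<in> terminal u0" "b \<in> terminal u0" "a \<noteq> b"
      by (metis card_le_Suc_iff numeral_2_eq_2 insert_iff)
    have "[c] \<in> lang S" if "c \<in> terminal u0" for c
    proof -
      from that obtain \<pi> where "\<pi> \<in> lang S" "\<pi> \<noteq> []" "last \<pi> = c" unfolding terminal_def by blast
      then show ?thesis using lang_suffix[of "butlast \<pi>" "[last \<pi>]"] by (metis append_butlast_last_id)
    qed
    then have "follower a \<noteq> follower b" using follower_separated ab unfolding follower_def by blast
    then obtain v where "v \<in> follower a \<and> v \<notin> follower b \<or> v \<in> follower b \<and> v \<notin> follower a"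
      by blast
    then obtain x y w where "x \<in> terminal u0" "y \<in> terminal u0" "x # w \<in> lang S"
        "map p (x # w) \<notin> follower y"
      using ab(1,2) unfolding follower_def by blast
    then have "terminal (u0 @ map p w) \<noteq> {} \<and> card (terminal (u0 @ map p w)) < card (terminal u0)"
      by (rule terminal_shrink)
    then show False using minimal by (meson leD)
  qed
  then obtain v where "terminal u0 = {v}" using card_1_singletonE by blast
  ultimately show ?thesis by blast
qed

definition sync :: "'b list" where
  "sync = (SOME u. u \<noteq> [] \<and> (\<exists>v. terminal u = {v}))"

lemma sync:
  assumes "S \<noteq> {}" shows "sync \<noteq> [] \<and> (\<exists>v. terminal sync = {v})"
proof -
  have "\<exists>u. u \<noteq> [] \<and> (\<exists>v. terminal u = {v})" using synchronizing_word_exists[OF assms] by blast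
  then show ?thesis unfolding sync_def by (rule someI_ex)
qed

lemma sync_in_Y:
  assumes "S \<noteq> {}" shows "\<exists>z\<in>Y. \<exists>a. wd z a (length sync) = sync"
proof -
  obtain v where "terminal sync = {v}" using sync[OF assms] by blast
  then obtain \<pi> where \<pi>: "\<pi> \<in> lang S" "map p \<pi> = sync" unfolding terminal_def by blast
  then obtain s a where s: "s \<in> S" "wd s a (length \<pi>) = \<pi>" unfolding lang_def occurs_wd by blast
  have "p \<circ> s \<in> Y" using S_onto s(1) by blast
  moreover have "wd (p \<circ> s) a (length sync) = sync"
  proof -
    have "wd (p \<circ> s) a (length \<pi>) = map p (wd s a (length \<pi>))" by (simp add: wd_def)
    moreover have "length \<pi> = length sync" using \<pi>(2) length_map by metis
    ultimately show ?thesis using s(2) \<pi>(2) by simp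
  qed
  ultimately show ?thesis by blast
qed

lemma terminal_of_point:
  assumes s: "s \<in> S" and u: "u \<noteq> []" and w: "wd (p \<circ> s) i (length u) = u"
  shows "s (i + int (length u) - 1) \<in> terminal u"
proof -
  let ?\<pi> = "wd s i (length u)"
  have "?\<pi> \<noteq> []" using u by (simp add: wd_def)
  moreover have "map p ?\<pi> = u" using w by (simp add: wd_def comp_def)
  moreover have "last ?\<pi> = s (i + int (length u) - 1)"
  proof -
    have "last ?\<pi> = ?\<pi> ! (length u - 1)" using last_conv_nth[OF \<open>?\<pi> \<noteq> []\<close>] by simp
    also have "\<dots> = s (i + int (length u - 1))" using u by simp
    finally show ?thesis using u by (cases u) auto
  qed
  ultimately show ?thesis using wd_in_lang[OF s] unfolding terminal_def by force
qed

lemma forward_determined: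
  assumes s: "s \<in> S" and s': "s' \<in> S" and e: "s e = s' e"
    and labels: "\<forall>i. e < i \<and> i \<le> j \<longrightarrow> p (s i) = p (s' i)"
  shows "e \<le> k \<Longrightarrow> k \<le> j \<Longrightarrow> s k = s' k"
proof (induction k rule: int_ge_induct)
  case (step i)
  have "[s i, s (i + 1)] \<in> lang S" using pair_lang[OF s] .
  moreover have "[s i, s' (i + 1)] \<in> lang S" using pair_lang[OF s'] step by simp
  moreover have "p (s (i + 1)) = p (s' (i + 1))" using labels step by simp
  ultimately show ?case using right_resolving by blast
qed (use e in simp)

text \<open>If the image of s is left-transitive, s is determined by the past of its image: the
  synchronizing word occurs in the past and fixes the state at its end.\<close>
lemma past_determined:
  assumes s: "s \<in> S" and s': "s' \<in> S" and lt: "left_transitive Y (p \<circ> s)"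
    and labels: "\<forall>i\<le>j. p (s i) = p (s' i)"
  shows "s j = s' j"
proof -
  have ne: "S \<noteq> {}" using s by blast
  obtain v where v: "terminal sync = {v}" and sync_ne: "sync \<noteq> []" using sync[OF ne] by blast
  obtain z a where z: "z \<in> Y" "wd z a (length sync) = sync" using sync_in_Y[OF ne] by blast
  obtain i where i: "i + int (length sync) \<le> j + 1" "wd (p \<circ> s) i (length sync) = sync"
    using left_transitive_occurs[OF lt z] by blast
  have "wd (p \<circ> s') i (length sync) = wd (p \<circ> s) i (length sync)"
    unfolding wd_def using i(1) labels by auto
  then have i': "wd (p \<circ> s') i (length sync) = sync" using i(2) by simp
  let ?e = "i + int (length sync) - 1"
  have "s ?e = s' ?e"
    using terminal_of_point[OF s sync_ne i(2)] terminal_of_point[OF s' sync_ne i'] v by simp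
  then show ?thesis using forward_determined[OF s s', of ?e j j] labels i(1) by simp
qed

text \<open>A chosen lift to S of a point of Y; for left-transitive points it is unique.\<close>
definition lift :: "(int \<Rightarrow> 'b) \<Rightarrow> (int \<Rightarrow> 'c)" where
  "lift y = (SOME s. s \<in> S \<and> p \<circ> s = y)"

lemma lift: "y \<in> Y \<Longrightarrow> lift y \<in> S \<and> p \<circ> lift y = y"
  unfolding lift_def using someI_ex[of "\<lambda>s. s \<in> S \<and> p \<circ> s = y"] S_onto by blast

lemma lift_label: "y \<in> Y \<Longrightarrow> p (lift y i) = y i"
  using lift[of y] by (metis comp_apply)

lemma lift_past:
  assumes lt: "left_transitive Y y" and lt': "left_transitive Y y'" and agree: "\<forall>i\<le>j. y i = y' i"
  shows "lift y j = lift y' j"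
proof (rule past_determined)
  have y: "y \<in> Y" and y': "y' \<in> Y" using lt lt' left_transitive_in by auto
  show "lift y \<in> S" "lift y' \<in> S" using lift y y' by auto
  show "left_transitive Y (p \<circ> lift y)" using lift[OF y] lt by simp
  show "\<forall>i\<le>j. p (lift y i) = p (lift y' i)" using agree lift_label[OF y] lift_label[OF y'] by simp
qed

lemma lift_shift:
  assumes lt: "left_transitive Y y"
  shows "lift (shift y) j = lift y (j + 1)"
proof -
  have y: "y \<in> Y" using left_transitive_in[OF lt] .
  have sy: "shift y \<in> Y" using Y_shift y by blast
  have "lift (shift y) \<in> S" using lift[OF sy] by blast
  moreover have "\<forall>i. (lift y (i + 1), lift y (i + 1 + 1)) \<in> E" using lift[OF y] mem_S by blast
  then have "shift (lift y) \<in> S" unfolding mem_S shift_def by simp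
  moreover have "left_transitive Y (p \<circ> lift (shift y))"
    using lift[OF sy] left_transitive_shift[OF lt] by simp
  moreover have "\<forall>i\<le>j. p (lift (shift y) i) = p (shift (lift y) i)"
    using lift_label[OF sy] lift_label[OF y] by (simp add: shift_def)
  ultimately have "lift (shift y) j = shift (lift y) j" by (rule past_determined)
  then show ?thesis by (simp add: shift_def)
qed

lemma lift_word:
  assumes y: "y \<in> Y"
  shows "lift y j # wd (lift y) (j + 1) n \<in> lang S" "map p (wd (lift y) (j + 1) n) = wd y (j + 1) n"
proof -
  have "wd (lift y) j (Suc n) = lift y j # wd (lift y) (j + 1) n"
    unfolding wd_def by (simp add: map_upt_Suc algebra_simps del: upt_Suc)
  then show "lift y j # wd (lift y) (j + 1) n \<in> lang S"
    using wd_in_lang[of "lift y" S j "Suc n"] lift[OF y] by auto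
  show "map p (wd (lift y) (j + 1) n) = wd y (j + 1) n"
    using lift_label[OF y] by (simp add: wd_def)
qed

end

section \<open>Right-continuing factor maps lift to the cover\<close>

locale rc_cover = sft_factor Y T f F + fischer_cover Y S p E
  for Y :: "(int \<Rightarrow> 'b::finite) set" and T :: "(int \<Rightarrow> 'a::finite) set"
    and f :: "(int \<Rightarrow> 'a) \<Rightarrow> (int \<Rightarrow> 'b)" and F :: "'a list set"
    and S :: "(int \<Rightarrow> 'c::finite) set" and p :: "'c \<Rightarrow> 'b" and E :: "('c \<times> 'c) set" +
  fixes N :: nat
  assumes right_continuing: "right_continuing_ae T Y f N"
begin

lemma continue_along_cover:
  assumes x1: "x1 \<in> T" and lt1: "left_transitive Y (f x1)"
    and path: "lift (f x1) (int N) # w \<in> lang S"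
  shows "\<exists>x'\<in>T. (\<forall>i\<le>0. x' i = x1 i) \<and> (\<forall>i\<le>int N. f x' i = f x1 i) \<and>
            wd (f x') (int N + 1) (length w) = map p w"
proof -
  let ?s1 = "lift (f x1)"
  have y1: "f x1 \<in> Y" using left_transitive_in[OF lt1] .
  obtain s0 i0 where s0: "s0 \<in> S" "\<forall>k<length (?s1 (int N) # w). s0 (i0 + int k) = (?s1 (int N) # w) ! k"
    using path lang_iff by metis
  have common: "?s1 (int N) = s0 i0" using s0(2)[rule_format, of 0] by simp
  define y' where "y' = p \<circ> (\<lambda>i. if i \<le> int N then ?s1 i else s0 (i - int N + i0))"
  have "y' \<in> Y" unfolding y'_def using S_onto glue_S[OF conjunct1[OF lift[OF y1]] s0(1) common] by blast
  moreover have past: "\<forall>i\<le>int N. y' i = f x1 (i + 0)" unfolding y'_def using lift_label[OF y1] by simp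
  ultimately have "left_transitive Y y'" by (rule left_transitive_past[OF lt1])
  then obtain x' where x': "x' \<in> T" "\<forall>i\<le>0. x' i = x1 i" "f x' = y'"
    using right_continuing x1 past unfolding right_continuing_ae_def by force
  have "wd y' (int N + 1) (length w) ! k = map p w ! k" if "k < length w" for k
  proof -
    have "wd y' (int N + 1) (length w) ! k = p (s0 (i0 + int (Suc k)))"
      using that unfolding y'_def by (simp add: algebra_simps)
    also have "\<dots> = map p w ! k" using s0(2)[rule_format, of "Suc k"] that by simp
    finally show ?thesis .
  qed
  then have "wd (f x') (int N + 1) (length w) = map p w" using x'(3) by (simp add: list_eq_iff_nth_eq)
  then show ?thesis using x' past by auto
qed

text \<open>If x1 and x2 have left-transitive images and agree on the window [-margin, N + rad],
  every label word following the state lift (f x1) N also follows lift (f x2) N: continue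
  x1 along the path, graft the past of x2 onto the result, and read off the lift.\<close>
lemma follower_transfer:
  assumes x1: "x1 \<in> T" and x2: "x2 \<in> T"
    and lt1: "left_transitive Y (f x1)" and lt2: "left_transitive Y (f x2)"
    and agree: "\<forall>i. - int margin \<le> i \<and> i \<le> int N + int rad \<longrightarrow> x1 i = x2 i"
    and path: "lift (f x1) (int N) # w \<in> lang S"
  shows "map p (lift (f x1) (int N) # w) \<in> follower (lift (f x2) (int N))"
proof -
  have y1: "f x1 \<in> Y" and y2: "f x2 \<in> Y" using lt1 lt2 left_transitive_in by auto
  have images_agree: "f x1 i = f x2 i" if "- int rad \<le> i" "i \<le> int N" for i
    by (rule radius_window[OF x1 x2, of "- int rad" "int N"]) (use agree that in \<open>auto simp: margin_def\<close>)
  obtain x' where x': "x' \<in> T" "\<forall>i\<le>0. x' i = x1 i" "\<forall>i\<le>int N. f x' i = f x1 i"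
      and labels: "wd (f x') (int N + 1) (length w) = map p w"
    using continue_along_cover[OF x1 lt1 path] by blast
  obtain x'' where x'': "x'' \<in> T" "\<forall>i\<le>- int rad. f x'' i = f x2 i" "\<forall>i\<ge>- int rad. f x'' i = f x' i"
    using graft_past[OF x2 x'(1)] agree x'(2) by (force simp: margin_def)
  have past: "\<forall>i\<le>int N. f x'' i = f x2 (i + 0)"
    using x'' x'(3) images_agree by (metis add_0_right linorder_le_cases)
  have future: "f x'' i = f x' i" if "i > int N" for i
    using x''(3) that by simp
  have lt'': "left_transitive Y (f x'')" by (rule left_transitive_past[OF lt2 f_in_Y[OF x''(1)] past])
  define ws where "ws = wd (lift (f x'')) (int N + 1) (length w)"
  have "lift (f x'') (int N) = lift (f x2) (int N)" using lift_past[OF lt'' lt2] past by simp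
  then have "lift (f x2) (int N) # ws \<in> lang S"
    using lift_word(1)[OF f_in_Y[OF x''(1)]] unfolding ws_def by metis
  moreover have "map p ws = map p w"
  proof -
    have "map p ws = wd (f x'') (int N + 1) (length w)"
      using lift_word(2)[OF f_in_Y[OF x''(1)]] unfolding ws_def .
    also have "\<dots> = wd (f x') (int N + 1) (length w)" using future unfolding wd_def by simp
    finally show ?thesis using labels by simp
  qed
  moreover have "p (lift (f x1) (int N)) = p (lift (f x2) (int N))"
    using lift_label[OF y1] lift_label[OF y2] images_agree[of "int N"] by simp
  ultimately have "map p (lift (f x1) (int N) # w) = map p (lift (f x2) (int N) # ws)
      \<and> lift (f x2) (int N) # ws \<in> lang S" by simp
  then show ?thesis unfolding follower_def by blast
qed

text \<open>Step 4: by follower-separation, the state lift (f x) N of a point with left-transitive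
  image only depends on x on the window [-margin, N + rad].\<close>
lemma state_window:
  assumes x1: "x1 \<in> T" and x2: "x2 \<in> T"
    and lt1: "left_transitive Y (f x1)" and lt2: "left_transitive Y (f x2)"
    and agree: "\<forall>i. - int margin \<le> i \<and> i \<le> int N + int rad \<longrightarrow> x1 i = x2 i"
  shows "lift (f x1) (int N) = lift (f x2) (int N)"
proof (rule ccontr)
  let ?a1 = "lift (f x1) (int N)" and ?a2 = "lift (f x2) (int N)"
  assume ne: "?a1 \<noteq> ?a2"
  have agree': "\<forall>i. - int margin \<le> i \<and> i \<le> int N + int rad \<longrightarrow> x2 i = x1 i" using agree by simp
  have "follower ?a1 \<subseteq> follower ?a2"
    unfolding follower_def[of ?a1] using follower_transfer[OF x1 x2 lt1 lt2 agree] by blast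
  moreover have "follower ?a2 \<subseteq> follower ?a1"
    unfolding follower_def[of ?a2] using follower_transfer[OF x2 x1 lt2 lt1 agree'] by blast
  moreover have "[?a1] \<in> lang S" "[?a2] \<in> lang S"
    using single_lang lift lt1 lt2 left_transitive_in by blast+
  ultimately show False using follower_separated ne unfolding follower_def by blast
qed

definition transitive_version :: "(int \<Rightarrow> 'a) \<Rightarrow> (int \<Rightarrow> 'a)" where
  "transitive_version x = (SOME t. t \<in> T \<and> (\<forall>i\<ge>- int margin. t i = x i) \<and> left_transitive Y (f t))"

lemma transitive_version:
  assumes "x \<in> T"
  shows "transitive_version x \<in> T" "\<forall>i\<ge>- int margin. transitive_version x i = x i"
    "left_transitive Y (f (transitive_version x))"
proof -
  have "\<exists>t. t \<in> T \<and> (\<forall>i\<ge>- int margin. t i = x i) \<and> left_transitive Y (f t)"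
    using left_transitive_modification[OF assms, of "- int margin"] by auto
  then have "transitive_version x \<in> T \<and> (\<forall>i\<ge>- int margin. transitive_version x i = x i) \<and>
      left_transitive Y (f (transitive_version x))"
    unfolding transitive_version_def by (rule someI_ex)
  then show "transitive_version x \<in> T" "\<forall>i\<ge>- int margin. transitive_version x i = x i"
    "left_transitive Y (f (transitive_version x))" by blast+
qed

definition state :: "(int \<Rightarrow> 'a) \<Rightarrow> 'c" where
  "state x = lift (f (transitive_version x)) (int N)"

definition phi :: "(int \<Rightarrow> 'a) \<Rightarrow> (int \<Rightarrow> 'c)" where
  "phi x = (\<lambda>i. state (shiftn (i - int N) x))"

lemma state_eq:
  assumes x: "x \<in> T" and t: "t \<in> T" "left_transitive Y (f t)"
    and agree: "\<forall>i. - int margin \<le> i \<and> i \<le> int N + int rad \<longrightarrow> x i = t i"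
  shows "state x = lift (f t) (int N)"
  unfolding state_def
  by (rule state_window) (use transitive_version[OF x] t agree in auto)

lemma state_local:
  assumes x: "x \<in> T" and x': "x' \<in> T"
    and agree: "\<forall>i. - int margin \<le> i \<and> i \<le> int N + int rad \<longrightarrow> x i = x' i"
  shows "state x = state x'"
  using state_eq[OF x transitive_version(1,3)[OF x']] transitive_version(2)[OF x'] agree
  unfolding state_def by auto

text \<open>phi maps into S: consecutive states of phi x are consecutive states of a single lift.\<close>
lemma phi_in_S:
  assumes x: "x \<in> T" shows "phi x \<in> S"
  unfolding mem_S
proof
  fix i
  define z where "z = shiftn (i - int N) x"
  have z: "z \<in> T" unfolding z_def using T_shiftn[OF x] .
  define t where "t = transitive_version z"
  note t = transitive_version[OF z, folded t_def]
  have "phi x (i + 1) = state (shift z)"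
    unfolding phi_def z_def by (simp add: shift_shiftn algebra_simps)
  also have "\<dots> = lift (f (shift t)) (int N)"
  proof (rule state_eq)
    show "shift z \<in> T" "shift t \<in> T" using T_shift z t(1) by blast+
    show "left_transitive Y (f (shift t))" using left_transitive_shift[OF t(3)] f_comm t(1) by simp
    show "\<forall>i. - int margin \<le> i \<and> i \<le> int N + int rad \<longrightarrow> shift z i = shift t i"
      using t(2) by (simp add: shift_def)
  qed
  also have "\<dots> = lift (f t) (int N + 1)" using f_comm t(1) lift_shift[OF t(3)] by simp
  finally have "phi x (i + 1) = lift (f t) (int N + 1)" .
  moreover have "phi x i = lift (f t) (int N)" unfolding phi_def state_def t_def z_def by simp
  moreover have "lift (f t) \<in> S" using lift left_transitive_in[OF t(3)] by blast
  ultimately show "(phi x i, phi x (i + 1)) \<in> E" using mem_S by simp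
qed

text \<open>phi lifts f, since the modification keeps x near time N.\<close>
lemma phi_label:
  assumes x: "x \<in> T" shows "p (phi x i) = f x i"
proof -
  define z where "z = shiftn (i - int N) x"
  have z: "z \<in> T" unfolding z_def using T_shiftn[OF x] .
  note t = transitive_version[OF z]
  have "p (phi x i) = f (transitive_version z) (int N)"
    unfolding phi_def state_def z_def[symmetric] using lift_label[OF left_transitive_in[OF t(3)]] by simp
  also have "\<dots> = f z (int N)"
    by (rule radius_window[OF t(1) z, of "int N" "int N"]) (use t(2) in \<open>auto simp: margin_def\<close>)
  also have "\<dots> = f x i" unfolding z_def using f_shiftn[OF x] by (simp add: shiftn_app)
  finally show ?thesis .
qed

lemma phi_cont: "cont_on T phi"
  unfolding cont_on_def
proof (intro ballI allI)
  fix x n assume x: "x \<in> T"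
  let ?m = "n + N + margin + rad"
  have "phi x' i = phi x i"
    if x': "x' \<in> T" and agree: "\<forall>i. \<bar>i\<bar> \<le> int ?m \<longrightarrow> x' i = x i" and i: "\<bar>i\<bar> \<le> int n" for x' i
    unfolding phi_def
  proof (rule state_local[OF T_shiftn[OF x'] T_shiftn[OF x]], intro allI impI)
    fix k assume "- int margin \<le> k \<and> k \<le> int N + int rad"
    then have "\<bar>k + (i - int N)\<bar> \<le> int ?m" using i by (auto simp: abs_le_iff)
    then show "shiftn (i - int N) x' k = shiftn (i - int N) x k" using agree by (simp add: shiftn_app)
  qed
  then show "\<exists>m::nat. \<forall>x'\<in>T. (\<forall>i. \<bar>i\<bar> \<le> int m \<longrightarrow> x' i = x i) \<longrightarrow>
      (\<forall>i. \<bar>i\<bar> \<le> int n \<longrightarrow> phi x' i = phi x i)" by blast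
qed

lemma phi_comm: "shift_commuting T phi"
  unfolding shift_commuting_def
proof (intro ballI ext)
  fix x :: "int \<Rightarrow> 'a" and i :: int
  have "shiftn (i - int N) (shift x) = shiftn (i + 1 - int N) x" by (simp add: shift_shiftn algebra_simps)
  then show "phi (shift x) i = shift (phi x) i" unfolding phi_def shift_def by simp
qed

end

lemma rc_cover_instance:
  fixes T :: "(int \<Rightarrow> 'a::finite) set" and Y :: "(int \<Rightarrow> 'b::finite) set"
    and S :: "(int \<Rightarrow> 'c::finite) set" and pi :: "(int \<Rightarrow> 'c) \<Rightarrow> (int \<Rightarrow> 'b)"
  assumes "subshift T" and "SFT T" and "irreducible_shift T" and "subshift Y"
    and "factor_map T Y f" and "right_continuing_ae T Y f N" and "minimal_rr_cover Y S pi"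
  shows "\<exists>F p E. rc_cover Y T f F S p E N \<and> (\<forall>s. pi s = p \<circ> s)"
proof -
  obtain F :: "'a list set" where F: "finite F" "T = {x. \<forall>w\<in>F. \<not> occurs w x}"
    using assms(2) unfolding SFT_def by blast
  obtain E :: "('c \<times> 'c) set" where E: "S = {s. \<forall>i. (s i, s (i + 1)) \<in> E}"
    using assms(7) unfolding minimal_rr_cover_def one_step_SFT_def by blast
  obtain p :: "'c \<Rightarrow> 'b" where p: "\<forall>s. pi s = p \<circ> s" "factor_map S Y pi"
      "\<forall>a b c. [a, b] \<in> lang S \<longrightarrow> [a, c] \<in> lang S \<longrightarrow> p b = p c \<longrightarrow> b = c"
      "\<forall>a b. [a] \<in> lang S \<longrightarrow> [b] \<in> lang S \<longrightarrow> a \<noteq> b \<longrightarrow>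
           {map p (a # w) | w. a # w \<in> lang S} \<noteq> {map p (b # w) | w. b # w \<in> lang S}"
    using assms(7) unfolding minimal_rr_cover_def by blast
  have "pi = (\<lambda>s. p \<circ> s)" using p(1) by (intro ext) simp
  then have "(\<lambda>s. p \<circ> s) ` S = Y" using p(2) unfolding factor_map_def by simp
  then have "rc_cover Y T f F S p E N"
    using assms F E p(3,4)
    by unfold_locales (auto simp: subshift_def factor_map_def shift_commuting_def)
  then show ?thesis using p(1) by blast
qed

theorem mainTheorem9:
  fixes T :: "(int \<Rightarrow> 'a::finite) set"
    and Y :: "(int \<Rightarrow> 'b::finite) set"
    and f :: "(int \<Rightarrow> 'a) \<Rightarrow> (int \<Rightarrow> 'b)"
    and N :: nat
    and S :: "(int \<Rightarrow> 'c::finite) set"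
    and pi :: "(int \<Rightarrow> 'c) \<Rightarrow> (int \<Rightarrow> 'b)"
  assumes "subshift T" and "SFT T" and "irreducible_shift T"
    and "subshift Y"
    and "factor_map T Y f"
    and "right_continuing_ae T Y f N"
    and "minimal_rr_cover Y S pi"
  shows "\<exists>\<phi> :: (int \<Rightarrow> 'a) \<Rightarrow> (int \<Rightarrow> 'c).
           (\<forall>x\<in>T. \<phi> x \<in> S) \<and> cont_on T \<phi> \<and> shift_commuting T \<phi> \<and>
           (\<forall>x\<in>T. f x = pi (\<phi> x))"
proof -
  obtain F p E where "rc_cover Y T f F S p E N" and pi: "\<forall>s. pi s = p \<circ> s"
    using rc_cover_instance[OF assms] by blast
  then interpret rc_cover Y T f F S p E N by simp
  have "\<forall>x\<in>T. f x = pi (phi x)" using phi_label pi by (simp add: fun_eq_iff)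
  then show ?thesis using phi_in_S phi_cont phi_comm by blast
qed

end
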